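(* In the quantum switch model of the context (with $W=\infty$), suppose $(\lambda_{ij}+\epsilon)_{i,j\in\mathcal K}\in\Lambda$ for some $\epsilon>0$ and Assumption 1 holds, and let $c_2$ be a constant, independent of $t$, such that $\mathbb E\big[\sum_{\tau=0}^{t-1}A_{ij}(\tau)\mid\overline S(t)\big]\mathbb P[\overline S(t)]\le c_2$ for all $t\ge1$ and all $i,j$, where $S(t)=\{\sum_{i\in\mathcal K}U_{ij}(t)\le E_{0j}(t)\ \forall j\in\mathcal K\}$. Let $L_{\mathrm{od}}(\mathbf u)=\sum_{i,j\in\mathcal K}u_{ij}$ and $\tilde\Delta_1^\pi(t)=\mathbb E[L_{\mathrm{od}}(\mathbf U(t+1))-L_{\mathrm{od}}(\mathbf U(t))]$ with $\mathbf U(t)=(U_{ij}(t))_{i,j}$. Then for any on-demand protocol $\pi$ and any slot $t_0$, $$\tilde\Delta_1^\pi(t_0)\le\sum_{i,j\in\mathcal K}\Big[\lambda_{ij}+qc_2-q\,\mathbb E[U_{ij}(t_0)]\Big].$$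
   Context: Quantum switch model. There are $K$ end nodes $\mathcal K=\{1,\dots,K\}$ and a switch (node $0$); time is slotted, $t=0,1,2,\dots$; pair-indexed quantities are symmetric in $(i,j)$. In slot $t$: (i) $C_{0i}(t)\in\{0,1\}$ EPR pairs are generated between the switch and node $i$, where $\{C_{0i}(t)\}_{t\ge0}$ are mutually independent Bernoulli processes (i.i.d. in $t$) with mean $p_i$. (ii) The switch chooses nonnegative integers $F_{ij}(t)=F_{ji}(t)$ (entanglement swaps for pair $(i,j)$, each consuming one stored switch–$i$ and one stored switch–$j$ pair) with $\sum_iF_{ij}(t)\le E_{0j}(t)$; no limit on swaps per slot ($W=\infty$); each swap succeeds independently with probability $q\in(0,1]$; $R_{ij}(t)$ is the number of successes. (iii) $A_{ij}(t)\in\mathbb N$ new requests for pair $(i,j)$ arrive. Dynamics: $U_{ij}(t+1)=[U_{ij}(t)-E_{ij}(t)-R_{ij}(t)]^++A_{ij}(t)$, $E_{ij}(t+1)=[E_{ij}(t)+R_{ij}(t)-U_{ij}(t)]^+$, $E_{0i}(t+1)=E_{0i}(t)-\sum_jF_{ij}(t)+C_{0i}(t)$, with zero initial values; $U_{ij}$ = pending requests, $E_{ij}$ = stored $i$–$j$ pairs, $E_{0i}$ = stored switch–$i$ pairs; memory unlimited, no decoherence. Requests: $\{A_{ij}(t)\}_t$ mutually independent across pairs, each stationary ergodic with rate $\lambda_{ij}$, and $\mathbb E[A_{ij}(t)^2\mid H(t)=h]\le A_{\max}^2$ for every $t,i,j$ and realization $h$ of the history $H(t)=(E_{ij}(\tau),U_{ij}(\tau),A_{ij}(\tau),R_{ij}(\tau),C_{0i}(\tau))_{\tau=0}^{t-1}$.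 $\Lambda$ is the set of nonnegative matrices $(\lambda_{ij})$ for which there exist nonnegative $f_{ij}=f_{ji}$ with $\sum_if_{ij}\le p_j$ for all $j$ and $\lambda_{ij}\le qf_{ij}$ for all $i,j$. Assumption 1: for every $\epsilon'>0$ there is a constant $c_1(\epsilon')$, independent of $t$, such that for all $t\ge1$ and all $i,j$, $\mathbb E\big[\sum_{\tau=0}^{t-1}A_{ij}(\tau)\,\big|\,B_1\big]\mathbb P[B_1]\le c_1(\epsilon')$, where $B_1$ is the event that $\big|\frac1t\sum_{\tau=0}^{t-1}A_{i'j'}(\tau)-\lambda_{i'j'}\big|>\epsilon'$ for some $i',j'$. On-demand protocols: in every slot $t$ the choices $F_{ij}=F_{ij}(t)$ satisfy $\sum_{i}F_{ij}\le E_{0j}(t)$ for all $j$; $F_{ij}\le U_{ij}(t)$; $F_{ij}=F_{ji}\in\mathbb N$; and $\big(E_{0i}(t)-\sum_kF_{ik}\big)\big(E_{0j}(t)-\sum_kF_{kj}\big)\big(U_{ij}(t)-F_{ij}\big)=0$ for all $i,j$. *)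

theory Defs
  imports "HOL-Probability.Probability"
begin

text \<open>End nodes are 1..K.  Sample paths: a i j t (arrivals), r i j t (swap successes),
  c i t (switch--i generations), f i j t (swap decisions).\<close>

definition Kset :: "nat \<Rightarrow> nat set" where
  "Kset K = {1..K}"

text \<open>Pending requests U and stored end-to-end pairs E (they depend only on a and r).\<close>
primrec UE :: "(nat \<Rightarrow> nat \<Rightarrow> nat \<Rightarrow> nat) \<Rightarrow> (nat \<Rightarrow> nat \<Rightarrow> nat \<Rightarrow> nat) \<Rightarrow> nat
    \<Rightarrow> (nat \<Rightarrow> nat \<Rightarrow> nat) \<times> (nat \<Rightarrow> nat \<Rightarrow> nat)" where
  "UE a r 0 = ((\<lambda>i j. 0), (\<lambda>i j. 0))"
| "UE a r (Suc t) =
     (let u = fst (UE a r t); e = snd (UE a r t) in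
       ((\<lambda>i j. (u i j - e i j - r i j t) + a i j t),
        (\<lambda>i j. (e i j + r i j t) - u i j)))"

text \<open>Stored switch--i pairs E_0i (nat subtraction is exact under the protocol constraints).\<close>
primrec E0st :: "nat \<Rightarrow> (nat \<Rightarrow> nat \<Rightarrow> nat) \<Rightarrow> (nat \<Rightarrow> nat \<Rightarrow> nat \<Rightarrow> nat) \<Rightarrow> nat \<Rightarrow> nat \<Rightarrow> nat" where
  "E0st K c f 0 = (\<lambda>i. 0)"
| "E0st K c f (Suc t) = (\<lambda>i. E0st K c f t i - (\<Sum>j\<in>Kset K. f i j t) + c i t)"

definition Uq :: "(nat \<Rightarrow> nat \<Rightarrow> nat \<Rightarrow> 'a \<Rightarrow> nat) \<Rightarrow> (nat \<Rightarrow> nat \<Rightarrow> nat \<Rightarrow> 'a \<Rightarrow> nat)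
    \<Rightarrow> nat \<Rightarrow> nat \<Rightarrow> nat \<Rightarrow> 'a \<Rightarrow> nat" where
  "Uq A R i j t \<omega> = fst (UE (\<lambda>i j t. A i j t \<omega>) (\<lambda>i j t. R i j t \<omega>) t) i j"

definition Eq :: "(nat \<Rightarrow> nat \<Rightarrow> nat \<Rightarrow> 'a \<Rightarrow> nat) \<Rightarrow> (nat \<Rightarrow> nat \<Rightarrow> nat \<Rightarrow> 'a \<Rightarrow> nat)
    \<Rightarrow> nat \<Rightarrow> nat \<Rightarrow> nat \<Rightarrow> 'a \<Rightarrow> nat" where
  "Eq A R i j t \<omega> = snd (UE (\<lambda>i j t. A i j t \<omega>) (\<lambda>i j t. R i j t \<omega>) t) i j"

definition E0q :: "nat \<Rightarrow> (nat \<Rightarrow> nat \<Rightarrow> 'a \<Rightarrow> nat) \<Rightarrow> (nat \<Rightarrow> nat \<Rightarrow> nat \<Rightarrow> 'a \<Rightarrow> nat)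
    \<Rightarrow> nat \<Rightarrow> nat \<Rightarrow> 'a \<Rightarrow> nat" where
  "E0q K C F i t \<omega> = E0st K (\<lambda>i t. C i t \<omega>) (\<lambda>i j t. F i j t \<omega>) t i"

definition gen_sets :: "'a measure \<Rightarrow> ('a \<Rightarrow> nat) set \<Rightarrow> 'a set set" where
  "gen_sets M V = sigma_sets (space M) {{\<omega> \<in> space M. X \<omega> = n} | X n. X \<in> V}"

definition hist_vars :: "nat \<Rightarrow> (nat \<Rightarrow> nat \<Rightarrow> nat \<Rightarrow> 'a \<Rightarrow> nat) \<Rightarrow> (nat \<Rightarrow> nat \<Rightarrow> nat \<Rightarrow> 'a \<Rightarrow> nat)
    \<Rightarrow> (nat \<Rightarrow> nat \<Rightarrow> 'a \<Rightarrow> nat) \<Rightarrow> nat \<Rightarrow> ('a \<Rightarrow> nat) set" where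
  "hist_vars K A R C t =
     {X. \<exists>i\<in>Kset K. \<exists>j\<in>Kset K. \<exists>\<tau><t.
          X = Eq A R i j \<tau> \<or> X = Uq A R i j \<tau> \<or> X = A i j \<tau> \<or> X = R i j \<tau> \<or> X = C i \<tau>}"

definition hist_sets where
  "hist_sets M K A R C t = gen_sets M (hist_vars K A R C t)"

text \<open>History together with the swap decisions of slot t (what swap outcomes are conditioned on).\<close>
definition hist_dec_sets where
  "hist_dec_sets M K A R C F t =
     gen_sets M (hist_vars K A R C t \<union> {F i j t | i j. i \<in> Kset K \<and> j \<in> Kset K})"

definition Pairs :: "nat \<Rightarrow> (nat \<times> nat) set" where
  "Pairs K = {(i, j). 1 \<le> i \<and> i \<le> j \<and> j \<le> K}"

abbreviation seqM :: "(nat \<Rightarrow> nat) measure" where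
  "seqM \<equiv> Pi\<^sub>M UNIV (\<lambda>_. count_space UNIV)"

definition generation_ok :: "'a measure \<Rightarrow> nat \<Rightarrow> (nat \<Rightarrow> real) \<Rightarrow> (nat \<Rightarrow> nat \<Rightarrow> 'a \<Rightarrow> nat) \<Rightarrow> bool" where
  "generation_ok M K p C \<longleftrightarrow>
     (\<forall>i\<in>Kset K. 0 \<le> p i \<and> p i \<le> 1) \<and>
     (\<forall>i\<in>Kset K. \<forall>t. C i t \<in> M \<rightarrow>\<^sub>M count_space UNIV \<and> (\<forall>\<omega>\<in>space M. C i t \<omega> \<le> 1) \<and>
         distr M (count_space UNIV) (C i t) =
           measure_pmf (map_pmf (\<lambda>b. if b then 1 else 0) (bernoulli_pmf (p i)))) \<and>
     prob_space.indep_vars M (\<lambda>_. count_space UNIV) (\<lambda>(i, t). C i t) (Kset K \<times> UNIV)"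

text \<open>Requests: symmetric in (i,j); the processes of distinct pairs are mutually independent;
  each is stationary ergodic with rate lam i j; conditional second moments bounded by Amax^2
  given the history (stated as: for every history event B, E[A^2; B] \<le> Amax^2 P(B)).\<close>
definition stationary_ergodic :: "'a measure \<Rightarrow> (nat \<Rightarrow> 'a \<Rightarrow> nat) \<Rightarrow> bool" where
  "stationary_ergodic M X \<longleftrightarrow>
     (\<forall>t. X t \<in> M \<rightarrow>\<^sub>M count_space UNIV) \<and>
     (\<forall>s. distr M seqM (\<lambda>\<omega> t. X (t + s) \<omega>) = distr M seqM (\<lambda>\<omega> t. X t \<omega>)) \<and>
     (\<forall>S \<in> sets seqM. (\<lambda>x t. x (Suc t)) -` S \<inter> space seqM = S \<longrightarrow>
        measure M {\<omega> \<in> space M. (\<lambda>t. X t \<omega>) \<in> S} = 0 \<or>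
        measure M {\<omega> \<in> space M. (\<lambda>t. X t \<omega>) \<in> S} = 1)"

definition arrivals_ok :: "'a measure \<Rightarrow> nat \<Rightarrow> (nat \<Rightarrow> nat \<Rightarrow> real) \<Rightarrow> real
    \<Rightarrow> (nat \<Rightarrow> nat \<Rightarrow> nat \<Rightarrow> 'a \<Rightarrow> nat) \<Rightarrow> (nat \<Rightarrow> nat \<Rightarrow> nat \<Rightarrow> 'a \<Rightarrow> nat)
    \<Rightarrow> (nat \<Rightarrow> nat \<Rightarrow> 'a \<Rightarrow> nat) \<Rightarrow> bool" where
  "arrivals_ok M K lam Amax A R C \<longleftrightarrow>
     (\<forall>i\<in>Kset K. \<forall>j\<in>Kset K. \<forall>t. A i j t = A j i t) \<and>
     (\<forall>i\<in>Kset K. \<forall>j\<in>Kset K. stationary_ergodic M (A i j) \<and>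
        lam i j = integral\<^sup>L M (\<lambda>\<omega>. real (A i j 0 \<omega>))) \<and>
     prob_space.indep_vars M (\<lambda>_. seqM) (\<lambda>(i, j) \<omega> t. A i j t \<omega>) (Pairs K) \<and>
     (\<forall>t. \<forall>i\<in>Kset K. \<forall>j\<in>Kset K. \<forall>B \<in> hist_sets M K A R C t.
        (\<integral>\<^sup>+ \<omega>\<in>B. ennreal ((real (A i j t \<omega>))\<^sup>2) \<partial>M) \<le> ennreal (Amax\<^sup>2) * emeasure M B)"

text \<open>Swaps: decisions are random variables, symmetric; given the history and the decisions of
  slot t, the success counts of the pairs are independent Binomial(F_ij(t), q).\<close>
definition swaps_ok :: "'a measure \<Rightarrow> nat \<Rightarrow> real
    \<Rightarrow> (nat \<Rightarrow> nat \<Rightarrow> nat \<Rightarrow> 'a \<Rightarrow> nat) \<Rightarrow> (nat \<Rightarrow> nat \<Rightarrow> nat \<Rightarrow> 'a \<Rightarrow> nat)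
    \<Rightarrow> (nat \<Rightarrow> nat \<Rightarrow> 'a \<Rightarrow> nat) \<Rightarrow> (nat \<Rightarrow> nat \<Rightarrow> nat \<Rightarrow> 'a \<Rightarrow> nat) \<Rightarrow> bool" where
  "swaps_ok M K q A R C F \<longleftrightarrow>
     (\<forall>i\<in>Kset K. \<forall>j\<in>Kset K. \<forall>t.
        F i j t \<in> M \<rightarrow>\<^sub>M count_space UNIV \<and> R i j t \<in> M \<rightarrow>\<^sub>M count_space UNIV \<and>
        R i j t = R j i t) \<and>
     (\<forall>t. \<forall>B \<in> hist_dec_sets M K A R C F t. \<forall>k :: nat \<Rightarrow> nat \<Rightarrow> nat.
        emeasure M (B \<inter> {\<omega> \<in> space M. \<forall>(i, j)\<in>Pairs K. R i j t \<omega> = k i j}) =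
        (\<integral>\<^sup>+ \<omega>\<in>B. (\<Prod>(i, j)\<in>Pairs K. ennreal (pmf (binomial_pmf (F i j t \<omega>) q) (k i j))) \<partial>M))"

definition on_demand :: "'a measure \<Rightarrow> nat \<Rightarrow> (nat \<Rightarrow> nat \<Rightarrow> nat \<Rightarrow> 'a \<Rightarrow> nat)
    \<Rightarrow> (nat \<Rightarrow> nat \<Rightarrow> nat \<Rightarrow> 'a \<Rightarrow> nat) \<Rightarrow> (nat \<Rightarrow> nat \<Rightarrow> 'a \<Rightarrow> nat)
    \<Rightarrow> (nat \<Rightarrow> nat \<Rightarrow> nat \<Rightarrow> 'a \<Rightarrow> nat) \<Rightarrow> bool" where
  "on_demand M K A R C F \<longleftrightarrow>
     (\<forall>t. \<forall>\<omega>\<in>space M.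
        (\<forall>j\<in>Kset K. (\<Sum>i\<in>Kset K. F i j t \<omega>) \<le> E0q K C F j t \<omega>) \<and>
        (\<forall>i\<in>Kset K. \<forall>j\<in>Kset K.
           F i j t \<omega> \<le> Uq A R i j t \<omega> \<and> F i j t \<omega> = F j i t \<omega> \<and>
           (int (E0q K C F i t \<omega>) - (\<Sum>k\<in>Kset K. int (F i k t \<omega>))) *
           (int (E0q K C F j t \<omega>) - (\<Sum>k\<in>Kset K. int (F k j t \<omega>))) *
           (int (Uq A R i j t \<omega>) - int (F i j t \<omega>)) = 0))"

definition capacity_region :: "nat \<Rightarrow> (nat \<Rightarrow> real) \<Rightarrow> real \<Rightarrow> (nat \<Rightarrow> nat \<Rightarrow> real) \<Rightarrow> bool" where
  "capacity_region K p q lam \<longleftrightarrow>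
     (\<forall>i\<in>Kset K. \<forall>j\<in>Kset K. 0 \<le> lam i j) \<and>
     (\<exists>f :: nat \<Rightarrow> nat \<Rightarrow> real.
        (\<forall>i\<in>Kset K. \<forall>j\<in>Kset K. 0 \<le> f i j \<and> f i j = f j i \<and> lam i j \<le> q * f i j) \<and>
        (\<forall>j\<in>Kset K. (\<Sum>i\<in>Kset K. f i j) \<le> p j))"

definition assumption1 :: "'a measure \<Rightarrow> nat \<Rightarrow> (nat \<Rightarrow> nat \<Rightarrow> real)
    \<Rightarrow> (nat \<Rightarrow> nat \<Rightarrow> nat \<Rightarrow> 'a \<Rightarrow> nat) \<Rightarrow> bool" where
  "assumption1 M K lam A \<longleftrightarrow>
     (\<forall>\<epsilon>'>0. \<exists>c1::real. \<forall>t\<ge>1. \<forall>i\<in>Kset K. \<forall>j\<in>Kset K.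
        integral\<^sup>L M (\<lambda>\<omega>. (\<Sum>\<tau><t. real (A i j \<tau> \<omega>)) *
          indicator {\<omega> \<in> space M. \<exists>i'\<in>Kset K. \<exists>j'\<in>Kset K.
              \<bar>(\<Sum>\<tau><t. real (A i' j' \<tau> \<omega>)) / real t - lam i' j'\<bar> > \<epsilon>'} \<omega>) \<le> c1)"

definition S_event :: "'a measure \<Rightarrow> nat \<Rightarrow> (nat \<Rightarrow> nat \<Rightarrow> nat \<Rightarrow> 'a \<Rightarrow> nat)
    \<Rightarrow> (nat \<Rightarrow> nat \<Rightarrow> nat \<Rightarrow> 'a \<Rightarrow> nat) \<Rightarrow> (nat \<Rightarrow> nat \<Rightarrow> 'a \<Rightarrow> nat)
    \<Rightarrow> (nat \<Rightarrow> nat \<Rightarrow> nat \<Rightarrow> 'a \<Rightarrow> nat) \<Rightarrow> nat \<Rightarrow> 'a set" where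
  "S_event M K A R C F t =
     {\<omega> \<in> space M. \<forall>j\<in>Kset K. (\<Sum>i\<in>Kset K. Uq A R i j t \<omega>) \<le> E0q K C F j t \<omega>}"

definition L_od :: "nat \<Rightarrow> (nat \<Rightarrow> nat \<Rightarrow> nat) \<Rightarrow> real" where
  "L_od K u = (\<Sum>i\<in>Kset K. \<Sum>j\<in>Kset K. real (u i j))"

definition drift1 :: "'a measure \<Rightarrow> nat \<Rightarrow> (nat \<Rightarrow> nat \<Rightarrow> nat \<Rightarrow> 'a \<Rightarrow> nat)
    \<Rightarrow> (nat \<Rightarrow> nat \<Rightarrow> nat \<Rightarrow> 'a \<Rightarrow> nat) \<Rightarrow> nat \<Rightarrow> real" where
  "drift1 M K A R t = integral\<^sup>L M (\<lambda>\<omega>.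
      L_od K (\<lambda>i j. Uq A R i j (Suc t) \<omega>) - L_od K (\<lambda>i j. Uq A R i j t \<omega>))"

end

theory Submission
  imports Defs
begin

text \<open>An on-demand protocol never attempts more swaps than there are pending requests,
  F_ij(t) <= U_ij(t), and at most F_ij(t) swaps succeed, so the recursion for U gives
  U_ij(t+1) - U_ij(t) <= A_ij(t) - R_ij(t). In expectation, stationarity gives E A_ij(t) = lambda_ij,
  and since given the decisions the successes are Binomial(F_ij(t), q), E R_ij(t) = q E F_ij(t).
  It remains to bound the unserved requests E (U_ij(t) - F_ij(t)) by c2: on S(t) the
  complementarity condition of the protocol forces F_ij(t) = U_ij(t), and off S(t)
  U_ij(t) - F_ij(t) <= U_ij(t) <= sum_{tau<t} A_ij(tau).\<close>

lemma Uq_0 [simp]: "Uq A R i j 0 \<omega> = 0"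
  by (simp add: Uq_def)

lemma Eq_0 [simp]: "Eq A R i j 0 \<omega> = 0"
  by (simp add: Eq_def)

lemma Uq_Suc: "Uq A R i j (Suc t) \<omega> = (Uq A R i j t \<omega> - Eq A R i j t \<omega> - R i j t \<omega>) + A i j t \<omega>"
  by (simp add: Uq_def Eq_def Let_def)

lemma Eq_Suc: "Eq A R i j (Suc t) \<omega> = (Eq A R i j t \<omega> + R i j t \<omega>) - Uq A R i j t \<omega>"
  by (simp add: Uq_def Eq_def Let_def)

lemma E0q_0 [simp]: "E0q K C F i 0 \<omega> = 0"
  by (simp add: E0q_def)

lemma E0q_Suc: "E0q K C F i (Suc t) \<omega> = E0q K C F i t \<omega> - (\<Sum>j\<in>Kset K. F i j t \<omega>) + C i t \<omega>"
  by (simp add: E0q_def)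

lemma finite_Kset [simp]: "finite (Kset K)"
  by (simp add: Kset_def)

lemma Uq_le_sum_arrivals: "Uq A R i j t \<omega> \<le> (\<Sum>\<tau><t. A i j \<tau> \<omega>)"
  by (induction t) (auto simp: Uq_Suc)

lemma Uq_Eq_swap:
  assumes "\<And>\<tau>. A i j \<tau> \<omega> = A j i \<tau> \<omega>" and "\<And>\<tau>. R i j \<tau> \<omega> = R j i \<tau> \<omega>"
  shows "Uq A R i j t \<omega> = Uq A R j i t \<omega> \<and> Eq A R i j t \<omega> = Eq A R j i t \<omega>"
  by (induction t) (auto simp: Uq_Suc Eq_Suc assms)

lemma Uq_Suc_sub_le:
  assumes "R i j t \<omega> \<le> Uq A R i j t \<omega>"
  shows "real (Uq A R i j (Suc t) \<omega>) - real (Uq A R i j t \<omega>) \<le> real (A i j t \<omega>) - real (R i j t \<omega>)"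
  using assms by (simp add: Uq_Suc)

lemma measurable_Uq_Eq:
  assumes [measurable]: "\<And>t. A i j t \<in> M \<rightarrow>\<^sub>M count_space UNIV" "\<And>t. R i j t \<in> M \<rightarrow>\<^sub>M count_space UNIV"
  shows "Uq A R i j t \<in> M \<rightarrow>\<^sub>M count_space UNIV \<and> Eq A R i j t \<in> M \<rightarrow>\<^sub>M count_space UNIV"
proof (induction t)
  case 0
  then show ?case by simp
next
  case (Suc t)
  then have [measurable]: "Uq A R i j t \<in> M \<rightarrow>\<^sub>M count_space UNIV" "Eq A R i j t \<in> M \<rightarrow>\<^sub>M count_space UNIV"
    by auto
  have "(\<lambda>\<omega>. (Uq A R i j t \<omega> - Eq A R i j t \<omega> - R i j t \<omega>) + A i j t \<omega>) \<in> M \<rightarrow>\<^sub>M count_space UNIV"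
       "(\<lambda>\<omega>. (Eq A R i j t \<omega> + R i j t \<omega>) - Uq A R i j t \<omega>) \<in> M \<rightarrow>\<^sub>M count_space UNIV"
    by measurable
  moreover have "Uq A R i j (Suc t) = (\<lambda>\<omega>. (Uq A R i j t \<omega> - Eq A R i j t \<omega> - R i j t \<omega>) + A i j t \<omega>)"
      "Eq A R i j (Suc t) = (\<lambda>\<omega>. (Eq A R i j t \<omega> + R i j t \<omega>) - Uq A R i j t \<omega>)"
    by (simp_all add: fun_eq_iff Uq_Suc Eq_Suc)
  ultimately show ?case
    by simp
qed

lemma emeasure_Int_comp_eq_map_pmf:
  fixes Y :: "'a \<Rightarrow> 'b" and D :: "'a \<Rightarrow> 'b pmf"
  assumes G: "countable G" and B: "B \<in> sets M"
    and Y: "\<And>\<omega>. \<omega> \<in> space M \<Longrightarrow> Y \<omega> \<in> G"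
    and level_sets: "\<And>g. g \<in> G \<Longrightarrow> {\<omega> \<in> space M. Y \<omega> = g} \<in> sets M"
    and support: "\<And>\<omega>. \<omega> \<in> space M \<Longrightarrow> set_pmf (D \<omega>) \<subseteq> G"
    and measurable_pmf: "\<And>g. g \<in> G \<Longrightarrow> (\<lambda>\<omega>. ennreal (pmf (D \<omega>) g)) \<in> borel_measurable M"
    and law: "\<And>g. g \<in> G \<Longrightarrow>
      emeasure M (B \<inter> {\<omega> \<in> space M. Y \<omega> = g}) = (\<integral>\<^sup>+\<omega>\<in>B. pmf (D \<omega>) g \<partial>M)"
  shows "emeasure M (B \<inter> {\<omega> \<in> space M. h (Y \<omega>) = c}) = (\<integral>\<^sup>+\<omega>\<in>B. pmf (map_pmf h (D \<omega>)) c \<partial>M)"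
proof -
  define H where "H = {g \<in> G. h g = c}"
  have H: "countable H"
    using G by (simp add: H_def)
  have "B \<inter> {\<omega> \<in> space M. h (Y \<omega>) = c} = (\<Union>g\<in>H. B \<inter> {\<omega> \<in> space M. Y \<omega> = g})"
    using Y by (auto simp: H_def)
  also have "emeasure M \<dots> =
      (\<integral>\<^sup>+g. emeasure M (B \<inter> {\<omega> \<in> space M. Y \<omega> = g}) \<partial>count_space H)"
    by (rule emeasure_UN_countable[OF _ H]) (use B level_sets in \<open>auto simp: H_def disjoint_family_on_def\<close>)
  also have "\<dots> = (\<integral>\<^sup>+g. \<integral>\<^sup>+\<omega>. ennreal (pmf (D \<omega>) g) * indicator B \<omega> \<partial>M \<partial>count_space H)"
    by (intro nn_integral_cong) (simp add: law H_def)
  also have "\<dots> = (\<integral>\<^sup>+\<omega>. \<integral>\<^sup>+g. ennreal (pmf (D \<omega>) g) * indicator B \<omega> \<partial>count_space H \<partial>M)"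
    using B measurable_pmf by (intro nn_integral_count_space_nn_integral[symmetric] H) (auto simp: H_def)
  also have "\<dots> = (\<integral>\<^sup>+\<omega>\<in>B. pmf (map_pmf h (D \<omega>)) c \<partial>M)"
  proof (intro nn_integral_cong)
    fix \<omega> assume \<omega>: "\<omega> \<in> space M"
    have "set_pmf (D \<omega>) \<inter> H = set_pmf (D \<omega>) \<inter> h -` {c}"
      using support[OF \<omega>] by (auto simp: H_def)
    then have "emeasure (D \<omega>) H = emeasure (D \<omega>) (h -` {c})"
      by (metis emeasure_Int_set_pmf inf_commute)
    then show "(\<integral>\<^sup>+g. ennreal (pmf (D \<omega>) g) * indicator B \<omega> \<partial>count_space H) =
        ennreal (pmf (map_pmf h (D \<omega>)) c) * indicator B \<omega>"
      by (simp add: nn_integral_multc nn_integral_pmf pmf_map measure_pmf.emeasure_eq_measure)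
  qed
  finally show ?thesis .
qed

lemma nn_integral_binomial_pmf_real:
  assumes "p \<in> {0..1}"
  shows "(\<integral>\<^sup>+k. ennreal (real k) \<partial>binomial_pmf n p) = ennreal (real n * p)"
proof (induction n)
  case 0
  then show ?case using assms by (simp add: binomial_pmf_0)
next
  case (Suc n)
  have "(\<integral>\<^sup>+k. ennreal (real k) \<partial>binomial_pmf (Suc n) p) =
      (\<integral>\<^sup>+b. (\<integral>\<^sup>+k. of_bool b + ennreal (real k) \<partial>binomial_pmf n p) \<partial>bernoulli_pmf p)"
    using assms by (simp add: binomial_pmf_Suc ennreal_plus)
  also have "\<dots> = (\<integral>\<^sup>+b. of_bool b + ennreal (real n * p) \<partial>bernoulli_pmf p)"
    by (simp add: nn_integral_add Suc measure_pmf.emeasure_space_1)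
  also have "\<dots> = ennreal (p + real n * p)"
    using assms by (simp add: nn_integral_add nn_integral_bernoulli_pmf measure_pmf.emeasure_space_1
      ennreal_plus)
  finally show ?case
    by (simp add: algebra_simps)
qed

lemma nn_integral_nat_mixture:
  fixes X :: "'a \<Rightarrow> nat" and D :: "'a \<Rightarrow> nat pmf" and f :: "nat \<Rightarrow> ennreal"
  assumes X: "X \<in> M \<rightarrow>\<^sub>M count_space UNIV"
    and measurable_pmf: "\<And>m. (\<lambda>\<omega>. ennreal (pmf (D \<omega>) m)) \<in> borel_measurable M"
    and law: "\<And>m. emeasure M {\<omega> \<in> space M. X \<omega> = m} = (\<integral>\<^sup>+\<omega>. pmf (D \<omega>) m \<partial>M)"
  shows "(\<integral>\<^sup>+\<omega>. f (X \<omega>) \<partial>M) = (\<integral>\<^sup>+\<omega>. \<integral>\<^sup>+m. f m \<partial>D \<omega> \<partial>M)"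
proof -
  have level_sets: "{\<omega> \<in> space M. X \<omega> = m} \<in> sets M" for m
    using X by measurable
  have "(\<integral>\<^sup>+\<omega>. f (X \<omega>) \<partial>M) =
      (\<integral>\<^sup>+\<omega>. \<integral>\<^sup>+m. f m * indicator {\<omega> \<in> space M. X \<omega> = m} \<omega> \<partial>count_space UNIV \<partial>M)"
  proof (intro nn_integral_cong)
    fix \<omega> assume "\<omega> \<in> space M"
    then have "f m * indicator {\<omega> \<in> space M. X \<omega> = m} \<omega> = f m * indicator {X \<omega>} m" for m
      by (simp split: split_indicator)
    then show "f (X \<omega>) =
        (\<integral>\<^sup>+m. f m * indicator {\<omega> \<in> space M. X \<omega> = m} \<omega> \<partial>count_space UNIV)"
      by simp
  qed
  also have "\<dots> = (\<integral>\<^sup>+m. f m * emeasure M {\<omega> \<in> space M. X \<omega> = m} \<partial>count_space UNIV)"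
    using level_sets by (simp add: nn_integral_count_space_nn_integral nn_integral_cmult_indicator)
  also have "\<dots> = (\<integral>\<^sup>+m. \<integral>\<^sup>+\<omega>. f m * pmf (D \<omega>) m \<partial>M \<partial>count_space UNIV)"
    using measurable_pmf by (simp add: law nn_integral_cmult)
  also have "\<dots> = (\<integral>\<^sup>+\<omega>. \<integral>\<^sup>+m. f m \<partial>D \<omega> \<partial>M)"
    using measurable_pmf
    by (simp add: nn_integral_count_space_nn_integral[symmetric] nn_integral_measure_pmf mult.commute)
  finally show ?thesis .
qed

lemma finite_Pairs: "finite (Pairs K)"
  by (rule finite_subset[of _ "{1..K} \<times> {1..K}"]) (auto simp: Pairs_def)

lemma Pairs_in_Kset: "(i, j) \<in> Pairs K \<Longrightarrow> i \<in> Kset K \<and> j \<in> Kset K"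
  by (auto simp: Pairs_def Kset_def)

lemma countable_PiE_dflt: "finite A \<Longrightarrow> countable (PiE_dflt A d (\<lambda>_. UNIV :: 'b :: countable set))"
  by (subst dflt_image_PiE[symmetric]) (auto intro: countable_PiE)

text \<open>The joint law of the swap successes R_ij(t), i <= j, that \<open>swaps_ok\<close> postulates given the
  history and the decisions F(t) = f.\<close>

definition swap_outcome_pmf :: "nat \<Rightarrow> real \<Rightarrow> (nat \<Rightarrow> nat \<Rightarrow> nat) \<Rightarrow> (nat \<times> nat \<Rightarrow> nat) pmf" where
  "swap_outcome_pmf K q f = Pi_pmf (Pairs K) 0 (\<lambda>(i, j). binomial_pmf (f i j) q)"

lemma pmf_swap_outcome_pmf:
  "g \<in> PiE_dflt (Pairs K) 0 (\<lambda>_. UNIV) \<Longrightarrow>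
    pmf (swap_outcome_pmf K q f) g = (\<Prod>(i, j)\<in>Pairs K. pmf (binomial_pmf (f i j) q) (g (i, j)))"
  unfolding swap_outcome_pmf_def
  by (subst pmf_Pi'[OF finite_Pairs]) (auto simp: PiE_dflt_def case_prod_beta intro!: prod.cong)

lemma set_pmf_swap_outcome_pmf: "set_pmf (swap_outcome_pmf K q f) \<subseteq> PiE_dflt (Pairs K) 0 (\<lambda>_. UNIV)"
  unfolding swap_outcome_pmf_def PiE_dflt_def using set_Pi_pmf_subset[OF finite_Pairs] by simp

lemma map_pmf_swap_outcome_pmf:
  "(i, j) \<in> Pairs K \<Longrightarrow> map_pmf (\<lambda>g. g (i, j)) (swap_outcome_pmf K q f) = binomial_pmf (f i j) q"
  by (simp add: swap_outcome_pmf_def Pi_pmf_component[OF finite_Pairs])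

locale quantum_switch = prob_space M for M :: "'a measure" +
  fixes K :: nat and p :: "nat \<Rightarrow> real" and q :: real and lam :: "nat \<Rightarrow> nat \<Rightarrow> real"
    and Amax :: real and A R F :: "nat \<Rightarrow> nat \<Rightarrow> nat \<Rightarrow> 'a \<Rightarrow> nat" and C :: "nat \<Rightarrow> nat \<Rightarrow> 'a \<Rightarrow> nat"
  assumes q_nonneg: "0 \<le> q" and q_le_1: "q \<le> 1"
    and generation: "generation_ok M K p C"
    and arrivals: "arrivals_ok M K lam Amax A R C"
    and swaps: "swaps_ok M K q A R C F"
    and protocol: "on_demand M K A R C F"
begin

lemma measurable_A: "i \<in> Kset K \<Longrightarrow> j \<in> Kset K \<Longrightarrow> A i j t \<in> M \<rightarrow>\<^sub>M count_space UNIV"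
  using arrivals by (auto simp: arrivals_ok_def stationary_ergodic_def)

lemma measurable_R: "i \<in> Kset K \<Longrightarrow> j \<in> Kset K \<Longrightarrow> R i j t \<in> M \<rightarrow>\<^sub>M count_space UNIV"
  and measurable_F: "i \<in> Kset K \<Longrightarrow> j \<in> Kset K \<Longrightarrow> F i j t \<in> M \<rightarrow>\<^sub>M count_space UNIV"
  using swaps by (auto simp: swaps_ok_def)

lemma measurable_Uq: "i \<in> Kset K \<Longrightarrow> j \<in> Kset K \<Longrightarrow> Uq A R i j t \<in> M \<rightarrow>\<^sub>M count_space UNIV"
  using measurable_Uq_Eq measurable_A measurable_R by blast

lemma measurable_E0q: "i \<in> Kset K \<Longrightarrow> E0q K C F i t \<in> M \<rightarrow>\<^sub>M count_space UNIV"
proof (induction t)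
  case 0
  then show ?case by simp
next
  case (Suc t)
  have [measurable]: "C i t \<in> M \<rightarrow>\<^sub>M count_space UNIV"
    using generation Suc.prems by (auto simp: generation_ok_def)
  have [measurable]: "j \<in> Kset K \<Longrightarrow> F i j t \<in> M \<rightarrow>\<^sub>M count_space UNIV" for j
    using measurable_F Suc.prems by blast
  have [measurable]: "E0q K C F i t \<in> M \<rightarrow>\<^sub>M count_space UNIV"
    using Suc by blast
  have "E0q K C F i (Suc t) = (\<lambda>\<omega>. E0q K C F i t \<omega> - (\<Sum>j\<in>Kset K. F i j t \<omega>) + C i t \<omega>)"
    by (simp add: fun_eq_iff E0q_Suc)
  also have "\<dots> \<in> M \<rightarrow>\<^sub>M count_space UNIV"
    by measurable
  finally show ?case .
qed

lemma sets_S_event: "S_event M K A R C F t \<in> sets M"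
proof -
  have "Measurable.pred M (\<lambda>\<omega>. (\<Sum>i\<in>Kset K. Uq A R i j t \<omega>) \<le> E0q K C F j t \<omega>)" if "j \<in> Kset K" for j
    by (rule measurable_compose_countable[where f = "\<lambda>n \<omega>. n \<le> E0q K C F j t \<omega>"])
      (use that measurable_Uq measurable_E0q in measurable)
  then show ?thesis
    unfolding S_event_def by measurable
qed

lemma integrable_arrivals:
  assumes ij: "i \<in> Kset K" "j \<in> Kset K"
  shows "integrable M (\<lambda>\<omega>. real (A i j t \<omega>))"
proof -
  have [measurable]: "A i j t \<in> M \<rightarrow>\<^sub>M count_space UNIV"
    using measurable_A ij by auto
  have "space M \<in> hist_sets M K A R C t"
    unfolding hist_sets_def gen_sets_def by (rule sigma_sets_top)
  then have "(\<integral>\<^sup>+\<omega>\<in>space M. ennreal ((real (A i j t \<omega>))\<^sup>2) \<partial>M) \<le> ennreal (Amax\<^sup>2) * emeasure M (space M)"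
    by (rule arrivals[unfolded arrivals_ok_def, THEN conjunct2, THEN conjunct2, THEN conjunct2, rule_format, OF ij])
  moreover have "(\<integral>\<^sup>+\<omega>\<in>space M. ennreal ((real (A i j t \<omega>))\<^sup>2) \<partial>M) =
      (\<integral>\<^sup>+\<omega>. ennreal ((real (A i j t \<omega>))\<^sup>2) \<partial>M)"
    by (rule nn_integral_cong) simp
  ultimately have "(\<integral>\<^sup>+\<omega>. ennreal ((real (A i j t \<omega>))\<^sup>2) \<partial>M) < \<infinity>"
    using ennreal_less_top le_less_trans by (fastforce simp: emeasure_space_1)
  then have "integrable M (\<lambda>\<omega>. (real (A i j t \<omega>))\<^sup>2)"
    by (intro integrableI_nonneg AE_I2) simp_all
  then show ?thesis
    by (rule square_integrable_imp_integrable[rotated]) simp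
qed

lemma integral_arrivals:
  assumes ij: "i \<in> Kset K" "j \<in> Kset K"
  shows "(\<integral>\<omega>. real (A i j t \<omega>) \<partial>M) = lam i j"
proof -
  have stationary: "stationary_ergodic M (A i j)" and lam: "lam i j = (\<integral>\<omega>. real (A i j 0 \<omega>) \<partial>M)"
    using arrivals[unfolded arrivals_ok_def, THEN conjunct2, THEN conjunct1, rule_format, OF ij] by auto
  have shift: "(\<lambda>\<omega> s. A i j (s + t') \<omega>) \<in> M \<rightarrow>\<^sub>M seqM" for t'
    by (rule measurable_PiM_single') (use measurable_A[OF ij] in auto)
  have head: "(\<lambda>x :: nat \<Rightarrow> nat. real (x 0)) \<in> borel_measurable seqM"
    by (rule measurable_compose[OF measurable_component_singleton]) simp_all
  have "(\<integral>\<omega>. real (A i j t \<omega>) \<partial>M) = (\<integral>x. real (x 0) \<partial>distr M seqM (\<lambda>\<omega> s. A i j (s + t) \<omega>))"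
    by (simp add: integral_distr[OF shift head])
  also have "\<dots> = (\<integral>x. real (x 0) \<partial>distr M seqM (\<lambda>\<omega> s. A i j (s + 0) \<omega>))"
    using stationary by (simp add: stationary_ergodic_def)
  also have "\<dots> = lam i j"
    by (subst integral_distr[OF shift head]) (simp_all add: lam)
  finally show ?thesis .
qed

lemma emeasure_swap_success_Pairs:
  assumes ab: "(a, b) \<in> Pairs K"
    and B: "B \<in> hist_dec_sets M K A R C F t" "B \<in> sets M"
  shows "emeasure M (B \<inter> {\<omega> \<in> space M. R a b t \<omega> = m}) =
    (\<integral>\<^sup>+\<omega>\<in>B. pmf (binomial_pmf (F a b t \<omega>) q) m \<partial>M)"
proof -
  define G where "G = PiE_dflt (Pairs K) 0 (\<lambda>_. UNIV :: nat set)"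
  define Y where "Y \<omega> = (\<lambda>x. if x \<in> Pairs K then R (fst x) (snd x) t \<omega> else 0)" for \<omega>
  define D where "D \<omega> = swap_outcome_pmf K q (\<lambda>i j. F i j t \<omega>)" for \<omega>
  have [measurable]: "x \<in> Pairs K \<Longrightarrow> R (fst x) (snd x) t \<in> M \<rightarrow>\<^sub>M count_space UNIV"
    "x \<in> Pairs K \<Longrightarrow> F (fst x) (snd x) t \<in> M \<rightarrow>\<^sub>M count_space UNIV" for x
    using measurable_R measurable_F Pairs_in_Kset[of "fst x" "snd x"] by auto
  have level_set: "{\<omega> \<in> space M. Y \<omega> = g} = {\<omega> \<in> space M. \<forall>(i, j)\<in>Pairs K. R i j t \<omega> = g (i, j)}"
    if "g \<in> G" for g
    using that by (auto simp: Y_def G_def PiE_dflt_def fun_eq_iff)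
  have joint_law: "emeasure M (B \<inter> {\<omega> \<in> space M. \<forall>(i, j)\<in>Pairs K. R i j t \<omega> = k i j}) =
      (\<integral>\<^sup>+\<omega>\<in>B. (\<Prod>(i, j)\<in>Pairs K. ennreal (pmf (binomial_pmf (F i j t \<omega>) q) (k i j))) \<partial>M)" for k
    using swaps[unfolded swaps_ok_def, THEN conjunct2, rule_format, OF B(1)] .
  have "emeasure M (B \<inter> {\<omega> \<in> space M. (\<lambda>g. g (a, b)) (Y \<omega>) = m}) =
      (\<integral>\<^sup>+\<omega>\<in>B. pmf (map_pmf (\<lambda>g. g (a, b)) (D \<omega>)) m \<partial>M)"
  proof (rule emeasure_Int_comp_eq_map_pmf[OF _ B(2)])
    show "countable G"
      by (simp add: G_def countable_PiE_dflt finite_Pairs)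
    show "Y \<omega> \<in> G" for \<omega>
      by (simp add: Y_def G_def PiE_dflt_def)
    show "{\<omega> \<in> space M. Y \<omega> = g} \<in> sets M" if "g \<in> G" for g
      unfolding level_set[OF that] case_prod_beta using finite_Pairs by measurable
    show "set_pmf (D \<omega>) \<subseteq> G" for \<omega>
      by (simp add: D_def G_def set_pmf_swap_outcome_pmf)
    show "(\<lambda>\<omega>. ennreal (pmf (D \<omega>) g)) \<in> borel_measurable M" if "g \<in> G" for g
      unfolding D_def pmf_swap_outcome_pmf[OF that[unfolded G_def]] case_prod_beta
      using finite_Pairs by measurable
    show "emeasure M (B \<inter> {\<omega> \<in> space M. Y \<omega> = g}) = (\<integral>\<^sup>+\<omega>\<in>B. pmf (D \<omega>) g \<partial>M)" if "g \<in> G" for g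
      using that joint_law[of "\<lambda>i j. g (i, j)"]
      by (simp add: level_set D_def G_def pmf_swap_outcome_pmf prod_ennreal case_prod_beta)
  qed
  then show ?thesis
    using ab by (simp add: Y_def D_def map_pmf_swap_outcome_pmf)
qed

lemma emeasure_swap_success:
  assumes ij: "i \<in> Kset K" "j \<in> Kset K"
    and B: "B \<in> hist_dec_sets M K A R C F t" "B \<in> sets M"
  shows "emeasure M (B \<inter> {\<omega> \<in> space M. R i j t \<omega> = m}) =
    (\<integral>\<^sup>+\<omega>\<in>B. pmf (binomial_pmf (F i j t \<omega>) q) m \<partial>M)"
proof (cases "i \<le> j")
  case True
  with ij have "(i, j) \<in> Pairs K"
    by (auto simp: Pairs_def Kset_def)
  then show ?thesis
    by (rule emeasure_swap_success_Pairs[OF _ B])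
next
  case False
  with ij have "(j, i) \<in> Pairs K"
    by (auto simp: Pairs_def Kset_def)
  moreover have "R i j t = R j i t"
    using swaps ij by (simp add: swaps_ok_def)
  moreover have "(\<integral>\<^sup>+\<omega>\<in>B. pmf (binomial_pmf (F i j t \<omega>) q) m \<partial>M) =
      (\<integral>\<^sup>+\<omega>\<in>B. pmf (binomial_pmf (F j i t \<omega>) q) m \<partial>M)"
    using protocol ij by (intro nn_integral_cong) (simp add: on_demand_def)
  ultimately show ?thesis
    using emeasure_swap_success_Pairs[OF _ B] by simp
qed

lemma AE_swap_success_le:
  assumes ij: "i \<in> Kset K" "j \<in> Kset K"
  shows "AE \<omega> in M. R i j t \<omega> \<le> F i j t \<omega>"
proof -
  have [measurable]: "R i j t \<in> M \<rightarrow>\<^sub>M count_space UNIV" "F i j t \<in> M \<rightarrow>\<^sub>M count_space UNIV"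
    using measurable_R measurable_F ij by auto
  define N where "N n m = {\<omega> \<in> space M. F i j t \<omega> = n} \<inter> {\<omega> \<in> space M. R i j t \<omega> = m}" for n m
  have "AE \<omega> in M. \<omega> \<notin> N n m" if "n < m" for n m
  proof (rule AE_not_in)
    have "{\<omega> \<in> space M. F i j t \<omega> = n} \<in> hist_dec_sets M K A R C F t"
      unfolding hist_dec_sets_def gen_sets_def using ij by (intro sigma_sets.Basic) blast
    then have "emeasure M (N n m) =
        (\<integral>\<^sup>+\<omega>\<in>{\<omega> \<in> space M. F i j t \<omega> = n}. pmf (binomial_pmf (F i j t \<omega>) q) m \<partial>M)"
      unfolding N_def by (rule emeasure_swap_success[OF ij]) measurable
    also have "\<dots> = 0"
      using that q_nonneg q_le_1 by (simp add: nn_integral_0_iff_AE binomial_eq_0 split: split_indicator)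
    finally show "N n m \<in> null_sets M"
      unfolding N_def by (simp add: null_sets_def)
  qed
  then have "AE \<omega> in M. \<forall>n m. n < m \<longrightarrow> \<omega> \<notin> N n m"
    by (simp add: AE_all_countable)
  then show ?thesis
    using AE_space by eventually_elim (metis (mono_tags, lifting) IntI N_def mem_Collect_eq not_le)
qed

lemma nn_integral_swap_success:
  assumes ij: "i \<in> Kset K" "j \<in> Kset K"
  shows "(\<integral>\<^sup>+\<omega>. ennreal (real (R i j t \<omega>)) \<partial>M) = (\<integral>\<^sup>+\<omega>. ennreal (q * real (F i j t \<omega>)) \<partial>M)"
proof -
  have [measurable]: "R i j t \<in> M \<rightarrow>\<^sub>M count_space UNIV" "F i j t \<in> M \<rightarrow>\<^sub>M count_space UNIV"
    using measurable_R measurable_F ij by auto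
  have "space M \<in> hist_dec_sets M K A R C F t"
    unfolding hist_dec_sets_def gen_sets_def by (rule sigma_sets_top)
  from emeasure_swap_success[OF ij this sets.top]
  have law: "emeasure M {\<omega> \<in> space M. R i j t \<omega> = m} = (\<integral>\<^sup>+\<omega>. pmf (binomial_pmf (F i j t \<omega>) q) m \<partial>M)"
    for m by (simp add: Int_absorb1 cong: nn_integral_cong)
  have "(\<integral>\<^sup>+\<omega>. ennreal (real (R i j t \<omega>)) \<partial>M) =
      (\<integral>\<^sup>+\<omega>. \<integral>\<^sup>+m. ennreal (real m) \<partial>binomial_pmf (F i j t \<omega>) q \<partial>M)"
    by (rule nn_integral_nat_mixture[OF _ _ law]) measurable
  also have "\<dots> = (\<integral>\<^sup>+\<omega>. ennreal (q * real (F i j t \<omega>)) \<partial>M)"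
    using q_nonneg q_le_1 by (simp add: nn_integral_binomial_pmf_real mult.commute)
  finally show ?thesis .
qed

lemma F_le_Uq: "\<omega> \<in> space M \<Longrightarrow> i \<in> Kset K \<Longrightarrow> j \<in> Kset K \<Longrightarrow> F i j t \<omega> \<le> Uq A R i j t \<omega>"
  using protocol by (simp add: on_demand_def)

lemma integrable_Uq:
  assumes ij: "i \<in> Kset K" "j \<in> Kset K"
  shows "integrable M (\<lambda>\<omega>. real (Uq A R i j t \<omega>))"
proof (rule Bochner_Integration.integrable_bound)
  show "integrable M (\<lambda>\<omega>. \<Sum>\<tau><t. real (A i j \<tau> \<omega>))"
    using integrable_arrivals[OF ij] by auto
  show "(\<lambda>\<omega>. real (Uq A R i j t \<omega>)) \<in> borel_measurable M"
    using measurable_Uq[OF ij] by measurable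
  show "AE \<omega> in M. norm (real (Uq A R i j t \<omega>)) \<le> norm (\<Sum>\<tau><t. real (A i j \<tau> \<omega>))"
    by (intro AE_I2) (simp add: Uq_le_sum_arrivals flip: of_nat_sum)
qed

lemma integrable_F:
  assumes ij: "i \<in> Kset K" "j \<in> Kset K"
  shows "integrable M (\<lambda>\<omega>. real (F i j t \<omega>))"
proof (rule Bochner_Integration.integrable_bound[OF integrable_Uq[OF ij]])
  show "(\<lambda>\<omega>. real (F i j t \<omega>)) \<in> borel_measurable M"
    using measurable_F[OF ij] by measurable
  show "AE \<omega> in M. norm (real (F i j t \<omega>)) \<le> norm (real (Uq A R i j t \<omega>))"
    using F_le_Uq ij by auto
qed

lemma integrable_R:
  assumes ij: "i \<in> Kset K" "j \<in> Kset K"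
  shows "integrable M (\<lambda>\<omega>. real (R i j t \<omega>))"
proof (rule Bochner_Integration.integrable_bound[OF integrable_F[OF ij]])
  show "(\<lambda>\<omega>. real (R i j t \<omega>)) \<in> borel_measurable M"
    using measurable_R[OF ij] by measurable
  show "AE \<omega> in M. norm (real (R i j t \<omega>)) \<le> norm (real (F i j t \<omega>))"
    using AE_swap_success_le[OF ij] by eventually_elim simp
qed

lemma integral_swap_success:
  assumes ij: "i \<in> Kset K" "j \<in> Kset K"
  shows "(\<integral>\<omega>. real (R i j t \<omega>) \<partial>M) = q * (\<integral>\<omega>. real (F i j t \<omega>) \<partial>M)"
proof -
  have "ennreal (\<integral>\<omega>. real (R i j t \<omega>) \<partial>M) = (\<integral>\<^sup>+\<omega>. ennreal (real (R i j t \<omega>)) \<partial>M)"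
    by (simp add: nn_integral_eq_integral integrable_R[OF ij])
  also have "\<dots> = (\<integral>\<^sup>+\<omega>. ennreal (q * real (F i j t \<omega>)) \<partial>M)"
    by (rule nn_integral_swap_success[OF ij])
  also have "\<dots> = ennreal (\<integral>\<omega>. q * real (F i j t \<omega>) \<partial>M)"
    using q_nonneg by (simp add: nn_integral_eq_integral integrable_F[OF ij])
  finally show ?thesis
    using q_nonneg by (simp add: integral_nonneg_AE)
qed

lemma Uq_sym:
  assumes ij: "i \<in> Kset K" "j \<in> Kset K"
  shows "Uq A R i j t \<omega> = Uq A R j i t \<omega>"
proof -
  have "A i j \<tau> = A j i \<tau>" for \<tau>
    using arrivals[unfolded arrivals_ok_def, THEN conjunct1, rule_format, OF ij] .
  moreover have "R i j \<tau> = R j i \<tau>" for \<tau>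
    using swaps[unfolded swaps_ok_def, THEN conjunct1, rule_format, OF ij] by blast
  ultimately show ?thesis
    using Uq_Eq_swap[of A i j \<omega> R] by simp
qed

text \<open>On S(t) the memory E_0j(t) covers all pending requests involving j, so an unserved request
  for (i, j) would make all three factors of the complementarity condition of an on-demand
  protocol nonzero.\<close>

lemma F_eq_Uq_on_S_event:
  assumes \<omega>: "\<omega> \<in> S_event M K A R C F t" and ij: "i \<in> Kset K" "j \<in> Kset K"
  shows "F i j t \<omega> = Uq A R i j t \<omega>"
proof (rule ccontr)
  assume "F i j t \<omega> \<noteq> Uq A R i j t \<omega>"
  moreover have \<omega>_space: "\<omega> \<in> space M"
    using \<omega> by (simp add: S_event_def)
  ultimately have less: "F i j t \<omega> < Uq A R i j t \<omega>"
    using F_le_Uq ij by (simp add: order_less_le)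
  have row: "(\<Sum>k\<in>Kset K. F i k t \<omega>) < E0q K C F i t \<omega>"
  proof -
    have "(\<Sum>k\<in>Kset K. F i k t \<omega>) < (\<Sum>k\<in>Kset K. Uq A R i k t \<omega>)"
      by (rule sum_strict_mono_ex1) (use F_le_Uq[OF \<omega>_space] ij less in auto)
    also have "\<dots> = (\<Sum>k\<in>Kset K. Uq A R k i t \<omega>)"
      using Uq_sym ij by (intro sum.cong) auto
    also have "\<dots> \<le> E0q K C F i t \<omega>"
      using \<omega> ij by (simp add: S_event_def)
    finally show ?thesis .
  qed
  have column: "(\<Sum>k\<in>Kset K. F k j t \<omega>) < E0q K C F j t \<omega>"
  proof -
    have "(\<Sum>k\<in>Kset K. F k j t \<omega>) < (\<Sum>k\<in>Kset K. Uq A R k j t \<omega>)"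
      by (rule sum_strict_mono_ex1) (use F_le_Uq[OF \<omega>_space] ij less in auto)
    also have "\<dots> \<le> E0q K C F j t \<omega>"
      using \<omega> ij by (simp add: S_event_def)
    finally show ?thesis .
  qed
  have "(int (E0q K C F i t \<omega>) - (\<Sum>k\<in>Kset K. int (F i k t \<omega>))) *
      (int (E0q K C F j t \<omega>) - (\<Sum>k\<in>Kset K. int (F k j t \<omega>))) *
      (int (Uq A R i j t \<omega>) - int (F i j t \<omega>)) = 0"
    using protocol[unfolded on_demand_def, rule_format, OF \<omega>_space, THEN conjunct2, rule_format, OF ij]
    by blast
  with row column less show False
    by (simp flip: of_nat_sum)
qed

lemma integral_unserved_le:
  assumes ij: "i \<in> Kset K" "j \<in> Kset K"
  shows "(\<integral>\<omega>. real (Uq A R i j t \<omega>) - real (F i j t \<omega>) \<partial>M) \<le>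
    (\<integral>\<omega>. (\<Sum>\<tau><t. real (A i j \<tau> \<omega>)) * indicator (space M - S_event M K A R C F t) \<omega> \<partial>M)"
proof (rule integral_mono)
  show "integrable M (\<lambda>\<omega>. real (Uq A R i j t \<omega>) - real (F i j t \<omega>))"
    using integrable_Uq[OF ij] integrable_F[OF ij] by simp
  show "integrable M (\<lambda>\<omega>. (\<Sum>\<tau><t. real (A i j \<tau> \<omega>)) * indicator (space M - S_event M K A R C F t) \<omega>)"
    using integrable_arrivals[OF ij] sets_S_event by (intro integrable_real_mult_indicator) auto
  fix \<omega> assume "\<omega> \<in> space M"
  then show "real (Uq A R i j t \<omega>) - real (F i j t \<omega>) \<le>
      (\<Sum>\<tau><t. real (A i j \<tau> \<omega>)) * indicator (space M - S_event M K A R C F t) \<omega>"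
    using F_eq_Uq_on_S_event[OF _ ij] Uq_le_sum_arrivals[of A R i j t \<omega>]
    by (auto simp: sum_nonneg split: split_indicator simp flip: of_nat_sum)
qed

lemma integral_Uq_diff_F_le:
  assumes ij: "i \<in> Kset K" "j \<in> Kset K"
    and c2: "\<And>t. t \<ge> 1 \<Longrightarrow>
      (\<integral>\<omega>. (\<Sum>\<tau><t. real (A i j \<tau> \<omega>)) * indicator (space M - S_event M K A R C F t) \<omega> \<partial>M) \<le> c2"
  shows "(\<integral>\<omega>. real (Uq A R i j t \<omega>) \<partial>M) - (\<integral>\<omega>. real (F i j t \<omega>) \<partial>M) \<le> c2"
proof (cases "t = 0")
  case True
  have "0 \<le> (\<integral>\<omega>. (\<Sum>\<tau><1. real (A i j \<tau> \<omega>)) * indicator (space M - S_event M K A R C F 1) \<omega> \<partial>M)"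
    by (rule Bochner_Integration.integral_nonneg) simp
  with c2[of 1] have "0 \<le> c2"
    by linarith
  moreover have "F i j t \<omega> = 0" if "\<omega> \<in> space M" for \<omega>
    using F_le_Uq[OF that ij, of t] True by simp
  ultimately show ?thesis
    using True by (simp cong: Bochner_Integration.integral_cong)
next
  case False
  have "(\<integral>\<omega>. real (Uq A R i j t \<omega>) \<partial>M) - (\<integral>\<omega>. real (F i j t \<omega>) \<partial>M) =
      (\<integral>\<omega>. real (Uq A R i j t \<omega>) - real (F i j t \<omega>) \<partial>M)"
    by (rule Bochner_Integration.integral_diff[OF integrable_Uq[OF ij] integrable_F[OF ij], symmetric])
  also have "\<dots> \<le> c2"
    using integral_unserved_le[OF ij, of t] c2[of t] False by linarith
  finally show ?thesis .
qed

lemma drift_pair_le: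
  assumes ij: "i \<in> Kset K" "j \<in> Kset K"
    and c2: "\<And>t. t \<ge> 1 \<Longrightarrow>
      (\<integral>\<omega>. (\<Sum>\<tau><t. real (A i j \<tau> \<omega>)) * indicator (space M - S_event M K A R C F t) \<omega> \<partial>M) \<le> c2"
  shows "(\<integral>\<omega>. real (Uq A R i j (Suc t) \<omega>) - real (Uq A R i j t \<omega>) \<partial>M) \<le>
    lam i j + q * c2 - q * (\<integral>\<omega>. real (Uq A R i j t \<omega>) \<partial>M)"
proof -
  have "(\<integral>\<omega>. real (Uq A R i j (Suc t) \<omega>) - real (Uq A R i j t \<omega>) \<partial>M) \<le>
      (\<integral>\<omega>. real (A i j t \<omega>) - real (R i j t \<omega>) \<partial>M)"
  proof (rule integral_mono_AE)
    show "integrable M (\<lambda>\<omega>. real (Uq A R i j (Suc t) \<omega>) - real (Uq A R i j t \<omega>))"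
      using integrable_Uq[OF ij] by simp
    show "integrable M (\<lambda>\<omega>. real (A i j t \<omega>) - real (R i j t \<omega>))"
      using integrable_arrivals[OF ij] integrable_R[OF ij] by simp
    show "AE \<omega> in M. real (Uq A R i j (Suc t) \<omega>) - real (Uq A R i j t \<omega>) \<le>
        real (A i j t \<omega>) - real (R i j t \<omega>)"
      using AE_space AE_swap_success_le[OF ij, of t]
    proof eventually_elim
      case (elim \<omega>)
      then have "R i j t \<omega> \<le> Uq A R i j t \<omega>"
        using F_le_Uq[OF _ ij, of \<omega> t] by linarith
      then show ?case
        by (rule Uq_Suc_sub_le)
    qed
  qed
  also have "\<dots> = lam i j - q * (\<integral>\<omega>. real (F i j t \<omega>) \<partial>M)"
    by (simp add: Bochner_Integration.integral_diff[OF integrable_arrivals[OF ij] integrable_R[OF ij]]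
      integral_arrivals[OF ij] integral_swap_success[OF ij])
  also have "\<dots> \<le> lam i j + q * c2 - q * (\<integral>\<omega>. real (Uq A R i j t \<omega>) \<partial>M)"
    using mult_left_mono[OF integral_Uq_diff_F_le[OF ij c2] q_nonneg] by (simp add: algebra_simps)
  finally show ?thesis .
qed

end

theorem lemma5:
  fixes M :: "'a measure" and K :: nat and p :: "nat \<Rightarrow> real" and q :: real
    and lam :: "nat \<Rightarrow> nat \<Rightarrow> real" and Amax \<epsilon> c2 :: real
    and A R F :: "nat \<Rightarrow> nat \<Rightarrow> nat \<Rightarrow> 'a \<Rightarrow> nat" and C :: "nat \<Rightarrow> nat \<Rightarrow> 'a \<Rightarrow> nat"
    and t0 :: nat
  assumes "prob_space M"
    and "0 < q" and "q \<le> 1"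
    and "generation_ok M K p C"
    and "arrivals_ok M K lam Amax A R C"
    and "swaps_ok M K q A R C F"
    and "on_demand M K A R C F"
    and "\<epsilon> > 0" and "capacity_region K p q (\<lambda>i j. lam i j + \<epsilon>)"
    and "assumption1 M K lam A"
    and "\<forall>t\<ge>1. \<forall>i\<in>Kset K. \<forall>j\<in>Kset K.
           integral\<^sup>L M (\<lambda>\<omega>. (\<Sum>\<tau><t. real (A i j \<tau> \<omega>)) *
             indicator (space M - S_event M K A R C F t) \<omega>) \<le> c2"
  shows "drift1 M K A R t0 \<le>
    (\<Sum>i\<in>Kset K. \<Sum>j\<in>Kset K.
       lam i j + q * c2 - q * integral\<^sup>L M (\<lambda>\<omega>. real (Uq A R i j t0 \<omega>)))"
proof -
  interpret quantum_switch M K p q lam Amax A R F C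
    by (intro quantum_switch.intro quantum_switch_axioms.intro) (use assms in auto)
  have integrable_increment: "integrable M (\<lambda>\<omega>. real (Uq A R i j (Suc t0) \<omega>) - real (Uq A R i j t0 \<omega>))"
    if "i \<in> Kset K" "j \<in> Kset K" for i j
    using integrable_Uq[OF that] by simp
  have "drift1 M K A R t0 =
      (\<integral>\<omega>. (\<Sum>i\<in>Kset K. \<Sum>j\<in>Kset K. real (Uq A R i j (Suc t0) \<omega>) - real (Uq A R i j t0 \<omega>)) \<partial>M)"
    unfolding drift1_def L_od_def by (simp add: sum_subtractf)
  also have "\<dots> =
      (\<Sum>i\<in>Kset K. \<Sum>j\<in>Kset K. \<integral>\<omega>. real (Uq A R i j (Suc t0) \<omega>) - real (Uq A R i j t0 \<omega>) \<partial>M)"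
    using integrable_increment
    by (simp add: Bochner_Integration.integral_sum Bochner_Integration.integrable_sum)
  also have "\<dots> \<le> (\<Sum>i\<in>Kset K. \<Sum>j\<in>Kset K.
      lam i j + q * c2 - q * (\<integral>\<omega>. real (Uq A R i j t0 \<omega>) \<partial>M))"
    using assms(11) by (intro sum_mono drift_pair_le) auto
  finally show ?thesis .
qed

end
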